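(* Let $T_2$ be the tree with vertices $w,x,y,z,u_1,a_1,b_1$ and edges $wx,xy,yz,zu_1,u_1a_1,u_1b_1$, and let $T_3$ be the tree obtained from $T_2$ by adding vertices $u_2,a_2,b_2$ and edges $zu_2,u_2a_2,u_2b_2$. Let $v$ be a vertex of $T_2$, $S$ a $\Delta_S$-star with $\Delta_S\ge 3$, and $G=T_2\rhd_v S$ a graph of order $n$ and maximum degree $\Delta\ge 3$ with $G\not\cong T_3$. Then $\gamma^{\rm ID}(G)\le \left(\frac{\Delta-1}{\Delta}\right)n$.
   Context: An identifying code of a graph $G$ is a set $C\subseteq V(G)$ such that every vertex $v$ has $N[v]\cap C\neq\emptyset$ and for all distinct $u,v$, $N[u]\cap C \ne N[v]\cap C$, where $N[v]$ is the closed neighborhood; $\gamma^{\rm ID}(G)$ is its minimum size. A $k$-star is $K_{1,k}$. For a graph $G'$, a vertex $v$ of $G'$ and a star $S$, $G'\rhd_v S$ is the graph obtained from the disjoint union of $G'$ and $S$ by identifying $v$ with a leaf of $S$. *)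

theory Defs
  imports Complex_Main
begin

text \<open>A finite simple graph is represented by its vertex set and its edge set,
  edges being two-element sets of vertices.\<close>
type_synonym 'a graph = "'a set \<times> 'a set set"

definition verts :: "'a graph \<Rightarrow> 'a set" where "verts G = fst G"
definition edges :: "'a graph \<Rightarrow> 'a set set" where "edges G = snd G"

definition nbhd :: "'a graph \<Rightarrow> 'a \<Rightarrow> 'a set" where
  "nbhd G v = {u \<in> verts G. {u, v} \<in> edges G \<and> u \<noteq> v}"

definition closed_nbhd :: "'a graph \<Rightarrow> 'a \<Rightarrow> 'a set" where
  "closed_nbhd G v = insert v (nbhd G v)"

definition degree :: "'a graph \<Rightarrow> 'a \<Rightarrow> nat" where
  "degree G v = card (nbhd G v)"

definition max_degree :: "'a graph \<Rightarrow> nat" where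
  "max_degree G = Max (degree G ` verts G)"

definition order :: "'a graph \<Rightarrow> nat" where
  "order G = card (verts G)"

definition is_id_code :: "'a graph \<Rightarrow> 'a set \<Rightarrow> bool" where
  "is_id_code G C \<longleftrightarrow> C \<subseteq> verts G
     \<and> (\<forall>v \<in> verts G. closed_nbhd G v \<inter> C \<noteq> {})
     \<and> (\<forall>u \<in> verts G. \<forall>v \<in> verts G. u \<noteq> v \<longrightarrow> closed_nbhd G u \<inter> C \<noteq> closed_nbhd G v \<inter> C)"

definition has_id_code :: "'a graph \<Rightarrow> bool" where
  "has_id_code G \<longleftrightarrow> (\<exists>C. is_id_code G C)"

text \<open>Identifying code number: minimum size of an identifying code
  (meaningful when has_id_code G).\<close>
definition gamma_ID :: "'a graph \<Rightarrow> nat" where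
  "gamma_ID G = (LEAST k. \<exists>C. is_id_code G C \<and> card C = k)"

definition graph_iso :: "'a graph \<Rightarrow> 'b graph \<Rightarrow> bool" where
  "graph_iso G H \<longleftrightarrow> (\<exists>f. bij_betw f (verts G) (verts H)
     \<and> (\<forall>u \<in> verts G. \<forall>v \<in> verts G. {u, v} \<in> edges G \<longleftrightarrow> {f u, f v} \<in> edges H))"

text \<open>star_attach G v k is G \<rhd>_v S for the k-star S = K_{1,k}:
  S has centre Inr 0 and leaves Inr 1, ..., Inr k; the leaf
  Inr 1 is identified with Inl v.\<close>
definition star_attach :: "'a graph \<Rightarrow> 'a \<Rightarrow> nat \<Rightarrow> ('a + nat) graph" where
  "star_attach G v k =
    (Inl ` verts G \<union> {Inr 0} \<union> Inr ` {2..k},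
     ((\<lambda>e. Inl ` e) ` edges G) \<union> {{Inr 0, Inl v}} \<union> ((\<lambda>i. {Inr 0, Inr i}) ` {2..k}))"

text \<open>T2: w=0, x=1, y=2, z=3, u1=4, a1=5, b1=6.\<close>
definition T2 :: "nat graph" where
  "T2 = ({0..6}, {{0,1},{1,2},{2,3},{3,4},{4,5},{4,6}})"

text \<open>T3: T2 plus u2=7, a2=8, b2=9 with edges z u2, u2 a2, u2 b2.\<close>
definition T3 :: "nat graph" where
  "T3 = ({0..9}, {{0,1},{1,2},{2,3},{3,4},{4,5},{4,6},{3,7},{7,8},{7,9}})"

end

(* If A contains v and identifies every vertex of T2 other than v, then A together with the
   centre of S and all leaves of S but one is an identifying code of G = T2 |>_v S, of size
   |A| + Delta_S - 1.  Such an A of size 4 exists for every v except z, where size 5 is needed.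
   Since n = Delta_S + 7 and Delta >= Delta_S, the bound reduces to |A| Delta_S + 7 <= 7 Delta_S,
   which fails only for |A| = 5 and Delta_S = 3, i.e. for v = z and G isomorphic to T3. *)
theory Submission
  imports Defs
begin

lemma verts_star_attach:
  "verts (star_attach G v k) = Inl ` verts G \<union> {Inr 0} \<union> Inr ` {2..k}"
  by (simp add: star_attach_def verts_def)

lemma verts_star_attach_cases:
  assumes "u \<in> verts (star_attach G v k)"
  obtains (Inl) x where "x \<in> verts G" "u = Inl x" | (centre) "u = Inr 0"
    | (leaf) i where "i \<in> {2..k}" "u = Inr i"
  using assms unfolding verts_star_attach by blast

lemma Inl_doubleton_eq_image_Inl: "{Inl a, Inl b} = Inl ` e \<longleftrightarrow> e = {a, b}"
proof -
  have "{Inl a, Inl b} = Inl ` {a, b}" by simp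
  then show ?thesis by (metis inj_Inl inj_image_eq_iff)
qed

lemma closed_nbhd_star_attach_Inl:
  assumes "x \<in> verts G" "v \<in> verts G"
  shows "closed_nbhd (star_attach G v k) (Inl x) =
    Inl ` closed_nbhd G x \<union> (if x = v then {Inr 0} else {})"
  using assms unfolding closed_nbhd_def nbhd_def star_attach_def verts_def edges_def
  by (auto simp: doubleton_eq_iff image_iff Inl_doubleton_eq_image_Inl)

lemma closed_nbhd_star_attach_centre:
  assumes "v \<in> verts G"
  shows "closed_nbhd (star_attach G v k) (Inr 0) = {Inr 0, Inl v} \<union> Inr ` {2..k}"
  using assms unfolding closed_nbhd_def nbhd_def star_attach_def verts_def edges_def
  by (auto simp: doubleton_eq_iff image_iff)

lemma closed_nbhd_star_attach_leaf:
  assumes "i \<in> {2..k}"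
  shows "closed_nbhd (star_attach G v k) (Inr i) = {Inr i, Inr 0}"
  using assms unfolding closed_nbhd_def nbhd_def star_attach_def verts_def edges_def
  by (auto simp: doubleton_eq_iff image_iff)

lemma order_star_attach:
  assumes "finite (verts G)" "k \<ge> 1"
  shows "order (star_attach G v k) = order G + k"
proof -
  have "verts (star_attach G v k) = insert (Inr 0) (Inl ` verts G \<union> Inr ` {2..k})"
    by (auto simp: verts_star_attach)
  moreover have "card (Inl ` verts G \<union> Inr ` {2..k}) = card (verts G) + (k - 1)"
    using assms(1) by (subst card_Un_disjoint) (auto simp: card_image)
  moreover have "Inr 0 \<notin> Inl ` verts G \<union> Inr ` {2..k}" by auto
  ultimately show ?thesis using assms by (simp add: order_def)
qed

lemma degree_star_attach_centre:
  assumes "v \<in> verts G" "k \<ge> 1"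
  shows "degree (star_attach G v k) (Inr 0) = k"
proof -
  have "nbhd (star_attach G v k) (Inr 0) = closed_nbhd (star_attach G v k) (Inr 0) - {Inr 0}"
    unfolding closed_nbhd_def nbhd_def by auto
  also have "\<dots> = insert (Inl v) (Inr ` {2..k})"
    unfolding closed_nbhd_star_attach_centre[OF assms(1)] by auto
  finally show ?thesis using assms(2) by (simp add: degree_def card_insert_if card_image image_iff)
qed

lemma max_degree_star_attach_ge:
  assumes "finite (verts G)" "v \<in> verts G" "k \<ge> 1"
  shows "k \<le> max_degree (star_attach G v k)"
proof -
  have "finite (verts (star_attach G v k))" using assms(1) by (simp add: verts_star_attach)
  moreover have "Inr 0 \<in> verts (star_attach G v k)" by (simp add: verts_star_attach)
  ultimately have "degree (star_attach G v k) (Inr 0) \<le> max_degree (star_attach G v k)"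
    unfolding max_degree_def by (intro Max_ge) auto
  then show ?thesis using degree_star_attach_centre[OF assms(2,3)] by simp
qed

(* The centre of the attached star dominates v and separates it from every other vertex,
   so A only has to identify the vertices of G other than v. *)
definition is_id_code_off :: "'a graph \<Rightarrow> 'a \<Rightarrow> 'a set \<Rightarrow> bool" where
  "is_id_code_off G v A \<longleftrightarrow> A \<subseteq> verts G \<and> v \<in> A
     \<and> (\<forall>x \<in> verts G - {v}. closed_nbhd G x \<inter> A \<noteq> {})
     \<and> (\<forall>x \<in> verts G - {v}. \<forall>y \<in> verts G - {v}. x \<noteq> y \<longrightarrow>
          closed_nbhd G x \<inter> A \<noteq> closed_nbhd G y \<inter> A)"

(* The leaf Inr 2 is left out: it is the only vertex whose trace is {Inr 0}. *)
definition star_code :: "'a set \<Rightarrow> nat \<Rightarrow> ('a + nat) set" where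
  "star_code A k = Inl ` A \<union> {Inr 0} \<union> Inr ` {3..k}"

lemma closed_nbhd_Inl_inter_star_code:
  assumes "x \<in> verts G" "v \<in> verts G"
  shows "closed_nbhd (star_attach G v k) (Inl x) \<inter> star_code A k =
    Inl ` (closed_nbhd G x \<inter> A) \<union> (if x = v then {Inr 0} else {})"
  using closed_nbhd_star_attach_Inl[OF assms, of k] by (auto simp: star_code_def)

lemma closed_nbhd_centre_inter_star_code:
  assumes "v \<in> verts G" "v \<in> A" "k \<ge> 3"
  shows "closed_nbhd (star_attach G v k) (Inr 0) \<inter> star_code A k = {Inr 0, Inl v} \<union> Inr ` {3..k}"
  unfolding closed_nbhd_star_attach_centre[OF assms(1)] star_code_def
  using assms(2,3) by (auto simp: image_iff)

lemma closed_nbhd_leaf_inter_star_code: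
  assumes "i \<in> {2..k}"
  shows "closed_nbhd (star_attach G v k) (Inr i) \<inter> star_code A k =
    {Inr 0} \<union> (if i \<ge> 3 then {Inr i} else {})"
  unfolding closed_nbhd_star_attach_leaf[OF assms] star_code_def using assms by (auto simp: image_iff)

lemma closed_nbhd_Inl_inter_star_code_inj:
  assumes "is_id_code_off G v A" "v \<in> verts G" "x \<in> verts G" "y \<in> verts G"
    and "closed_nbhd (star_attach G v k) (Inl x) \<inter> star_code A k =
      closed_nbhd (star_attach G v k) (Inl y) \<inter> star_code A k"
  shows "x = y"
proof (rule ccontr)
  note traces = assms(5)[unfolded closed_nbhd_Inl_inter_star_code[OF assms(3,2)]
      closed_nbhd_Inl_inter_star_code[OF assms(4,2)]]
  assume "x \<noteq> y"
  with traces have "x \<noteq> v" "y \<noteq> v" by (auto split: if_splits)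
  with traces have "closed_nbhd G x \<inter> A = closed_nbhd G y \<inter> A"
    by (simp add: inj_image_eq_iff)
  with assms(1,3,4) \<open>x \<noteq> y\<close> \<open>x \<noteq> v\<close> \<open>y \<noteq> v\<close> show False
    unfolding is_id_code_off_def by blast
qed

lemma closed_nbhd_Inl_inter_star_code_ne_Inr:
  assumes "v \<in> verts G" "v \<in> A" "k \<ge> 3" "x \<in> verts G" "i = 0 \<or> i \<in> {2..k}"
  shows "closed_nbhd (star_attach G v k) (Inl x) \<inter> star_code A k \<noteq>
    closed_nbhd (star_attach G v k) (Inr i) \<inter> star_code A k"
  (is "?S (Inl x) \<noteq> ?S (Inr i)")
proof (cases "i = 2")
  case True
  have "?S (Inr 2) = {Inr 0}"
    using closed_nbhd_leaf_inter_star_code[of 2 k] assms(3) by simp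
  moreover have "?S (Inl x) \<noteq> {Inr 0}"
    unfolding closed_nbhd_Inl_inter_star_code[OF assms(4,1)] using assms(2)
    by (auto simp: closed_nbhd_def)
  ultimately show ?thesis unfolding True by simp
next
  case False
  define j where "j = max 3 i"
  have "Inr j \<in> ?S (Inr i)"
  proof (cases "i = 0")
    case True
    then show ?thesis using closed_nbhd_centre_inter_star_code[OF assms(1-3)] assms(3)
      by (simp add: j_def)
  next
    case False
    with \<open>i \<noteq> 2\<close> assms(5) have "i \<in> {2..k}" "i \<ge> 3" by auto
    then show ?thesis unfolding closed_nbhd_leaf_inter_star_code[OF \<open>i \<in> {2..k}\<close>]
      by (simp add: j_def)
  qed
  moreover have "Inr j \<notin> ?S (Inl x)"
    unfolding closed_nbhd_Inl_inter_star_code[OF assms(4,1)] by (auto simp: j_def)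
  ultimately show ?thesis by blast
qed

lemma is_id_code_star_attach:
  assumes A: "is_id_code_off G v A" and v: "v \<in> verts G" and k: "k \<ge> 3"
  shows "is_id_code (star_attach G v k) (star_code A k)"
proof -
  let ?H = "star_attach G v k"
  let ?S = "\<lambda>u. closed_nbhd ?H u \<inter> star_code A k"
  have "v \<in> A" using A unfolding is_id_code_off_def by blast
  note S_Inl = closed_nbhd_Inl_inter_star_code[OF _ v]
    and S_centre = closed_nbhd_centre_inter_star_code[OF v \<open>v \<in> A\<close> k]
    and S_leaf = closed_nbhd_leaf_inter_star_code
  have centre_ne_leaf: "?S (Inr 0) \<noteq> ?S (Inr i)" if "i \<in> {2..k}" for i
  proof -
    have "Inl v \<in> ?S (Inr 0)" unfolding S_centre by simp
    moreover have "Inl v \<notin> ?S (Inr i)" unfolding S_leaf[OF that] by simp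
    ultimately show ?thesis by blast
  qed
  have leaf_mem: "Inr i \<in> ?S (Inr j) \<longleftrightarrow> i = j" if "j \<in> {2..k}" "i \<ge> 3" for i j
    unfolding S_leaf[OF that(1)] using that(2) by auto
  have leaf_inj: "i = j" if "i \<in> {2..k}" "j \<in> {2..k}" "?S (Inr i) = ?S (Inr j)" for i j
  proof -
    consider "i \<ge> 3" | "j \<ge> 3" | "i = 2" "j = 2"
      using \<open>i \<in> {2..k}\<close> \<open>j \<in> {2..k}\<close> by (cases "i \<ge> 3"; cases "j \<ge> 3") auto
    then show ?thesis using leaf_mem that by cases metis+
  qed
  have "?S u \<noteq> {}" if "u \<in> verts ?H" for u
    using that
  proof (cases rule: verts_star_attach_cases)
    case (Inl x)
    then show ?thesis
      unfolding Inl(2) S_Inl[OF Inl(1)] using A unfolding is_id_code_off_def by auto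
  next
    case centre
    then show ?thesis unfolding centre S_centre by simp
  next
    case (leaf i)
    then show ?thesis unfolding leaf(2) S_leaf[OF leaf(1)] by simp
  qed
  moreover have "u = w" if "u \<in> verts ?H" "w \<in> verts ?H" "?S u = ?S w" for u w
    using that(1,2) that(3)
    by (elim verts_star_attach_cases; clarify;
        metis closed_nbhd_Inl_inter_star_code_inj[OF A v] centre_ne_leaf leaf_inj
          closed_nbhd_Inl_inter_star_code_ne_Inr[OF v \<open>v \<in> A\<close> k])
  moreover have "star_code A k \<subseteq> verts ?H"
    using A k unfolding is_id_code_off_def star_code_def by (auto simp: verts_star_attach)
  ultimately show ?thesis unfolding is_id_code_def by blast
qed

lemma card_star_code:
  assumes "finite A"
  shows "card (star_code A k) = card A + (k - 2) + 1"
proof -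
  have "card (Inl ` A \<union> Inr ` {3..k} :: ('a + nat) set) = card A + (k - 2)"
    using assms by (subst card_Un_disjoint) (auto simp: card_image)
  moreover have "star_code A k = insert (Inr 0) (Inl ` A \<union> Inr ` {3..k})"
    by (auto simp: star_code_def)
  moreover have "Inr 0 \<notin> Inl ` A \<union> Inr ` {3..k}" by auto
  ultimately show ?thesis using assms by (simp add: card_insert_disjoint)
qed

lemma gamma_ID_star_attach_le:
  assumes "finite (verts G)" "v \<in> verts G" "k \<ge> 3" "is_id_code_off G v A"
  shows "has_id_code (star_attach G v k)" "gamma_ID (star_attach G v k) \<le> card A + k - 1"
proof -
  have code: "is_id_code (star_attach G v k) (star_code A k)"
    using is_id_code_star_attach assms(4,2,3) .
  then show "has_id_code (star_attach G v k)" unfolding has_id_code_def by blast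
  have "finite A"
    using assms(1,4) finite_subset unfolding is_id_code_off_def by blast
  then have "card (star_code A k) = card A + k - 1"
    using card_star_code[of A k] assms(3) by linarith
  then show "gamma_ID (star_attach G v k) \<le> card A + k - 1"
    unfolding gamma_ID_def using code by (intro Least_le) blast
qed

lemma pred_div_self_mono:
  fixes a b :: real
  assumes "0 < a" "a \<le> b"
  shows "(a - 1) / a \<le> (b - 1) / b"
proof -
  have "(a - 1) * b \<le> (b - 1) * a" using assms by (simp add: algebra_simps)
  then show ?thesis using assms by (simp add: divide_simps)
qed

lemma gamma_ID_star_attach_ratio_bound:
  assumes "finite (verts G)" "v \<in> verts G" "k \<ge> 3" "is_id_code_off G v A"
    and count: "real (card A + k - 1) * k \<le> (real k - 1) * real (order G + k)"
  defines "H \<equiv> star_attach G v k"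
  shows "has_id_code H \<and>
    real (gamma_ID H) \<le> (real (max_degree H) - 1) / real (max_degree H) * real (order H)"
proof -
  have "real (gamma_ID H) \<le> real (card A + k - 1)"
    using gamma_ID_star_attach_le(2)[OF assms(1-4)] unfolding H_def by simp
  also have "\<dots> \<le> (real k - 1) / real k * real (order G + k)"
    using count assms(3) by (simp add: field_simps)
  also have "\<dots> \<le> (real (max_degree H) - 1) / real (max_degree H) * real (order G + k)"
    using max_degree_star_attach_ge[OF assms(1,2)] assms(3) unfolding H_def
    by (intro mult_right_mono pred_div_self_mono) auto
  also have "\<dots> = (real (max_degree H) - 1) / real (max_degree H) * real (order H)"
    using order_star_attach[OF assms(1)] assms(3) unfolding H_def by simp
  finally show ?thesis
    using gamma_ID_star_attach_le(1)[OF assms(1-4)] unfolding H_def by blast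
qed

lemma verts_T2: "verts T2 = {0, 1, 2, 3, 4, 5, 6}"
  by (auto simp: T2_def verts_def)

lemma order_T2: "order T2 = 7"
  by (simp add: order_def verts_T2)

lemma closed_nbhd_T2:
  "closed_nbhd T2 0 = {0, 1}" "closed_nbhd T2 1 = {0, 1, 2}" "closed_nbhd T2 2 = {1, 2, 3}"
  "closed_nbhd T2 3 = {2, 3, 4}" "closed_nbhd T2 4 = {3, 4, 5, 6}" "closed_nbhd T2 5 = {4, 5}"
  "closed_nbhd T2 6 = {4, 6}"
  by (auto simp: closed_nbhd_def nbhd_def T2_def verts_def edges_def doubleton_eq_iff)

lemma is_id_code_off_T2:
  "is_id_code_off T2 0 {0, 3, 4, 5}" "is_id_code_off T2 1 {1, 2, 5, 6}"
  "is_id_code_off T2 2 {0, 2, 5, 6}" "is_id_code_off T2 3 {0, 2, 3, 4, 5}"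
  "is_id_code_off T2 4 {0, 2, 4, 5}" "is_id_code_off T2 5 {0, 2, 4, 5}"
  "is_id_code_off T2 6 {0, 2, 4, 6}"
  unfolding is_id_code_off_def verts_T2
  \<comment> \<open>simp writes the vertex 1 of verts T2 - {v} as Suc 0\<close>
  by (simp_all add: closed_nbhd_T2 closed_nbhd_T2(2)[unfolded One_nat_def] insert_Diff_if)
    (simp_all add: set_eq_subset)

lemma T2_has_small_id_code_off:
  assumes "v \<in> verts T2"
  shows "\<exists>A. is_id_code_off T2 v A \<and> card A \<le> (if v = 3 then 5 else 4)"
proof -
  consider "v = 0" | "v = 1" | "v = 2" | "v = 3" | "v = 4" | "v = 5" | "v = 6"
    using assms unfolding verts_T2 by blast
  then show ?thesis using is_id_code_off_T2 by cases fastforce+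
qed

lemma star_attach_T2_3_3_iso_T3: "graph_iso (star_attach T2 3 3) T3"
proof -
  let ?f = "case_sum (\<lambda>x. x) (\<lambda>i. if i = 0 then 7 else i + 6) :: nat + nat \<Rightarrow> nat"
  have V: "verts (star_attach T2 3 3) =
      {Inl 0, Inl 1, Inl 2, Inl 3, Inl 4, Inl 5, Inl 6, Inr 0, Inr 2, Inr 3}"
    unfolding verts_star_attach verts_T2 by (auto simp: atLeastAtMost_iff)
  have "{2..3::nat} = {2, 3}" by auto
  then have E: "edges (star_attach T2 3 3) = {{Inl 0, Inl 1}, {Inl 1, Inl 2}, {Inl 2, Inl 3},
      {Inl 3, Inl 4}, {Inl 4, Inl 5}, {Inl 4, Inl 6}, {Inr 0, Inl 3}, {Inr 0, Inr 2}, {Inr 0, Inr 3}}"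
    unfolding star_attach_def edges_def T2_def by (simp add: insert_commute)
  have V3: "verts T3 = {0, 1, 2, 3, 4, 5, 6, 7, 8, 9}" by (auto simp: T3_def verts_def)
  have E3: "edges T3 = {{0, 1}, {1, 2}, {2, 3}, {3, 4}, {4, 5}, {4, 6}, {3, 7}, {7, 8}, {7, 9}}"
    by (simp add: T3_def edges_def)
  have "bij_betw ?f (verts (star_attach T2 3 3)) (verts T3)"
    unfolding bij_betw_def V V3 by (auto simp: inj_on_def)
  moreover have "\<forall>u \<in> verts (star_attach T2 3 3). \<forall>w \<in> verts (star_attach T2 3 3).
      {u, w} \<in> edges (star_attach T2 3 3) \<longleftrightarrow> {?f u, ?f w} \<in> edges T3"
    unfolding V E E3 by (simp add: doubleton_eq_iff)
  ultimately show ?thesis unfolding graph_iso_def by blast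
qed

theorem mainTheorem10:
  fixes v :: nat and k :: nat and G :: "(nat + nat) graph"
  assumes "v \<in> verts T2"
    and "k \<ge> 3"
    and "G = star_attach T2 v k"
    and "max_degree G \<ge> 3"
    and "\<not> graph_iso G T3"
  shows "has_id_code G \<and>
    real (gamma_ID G) \<le> ((real (max_degree G) - 1) / real (max_degree G)) * real (order G)"
proof -
  obtain A where A: "is_id_code_off T2 v A" and card_A: "card A \<le> (if v = 3 then 5 else 4)"
    using T2_has_small_id_code_off[OF assms(1)] by blast
  have "card A * k + 7 \<le> 7 * k"
  proof (cases "v = 3")
    case True
    then have "k \<ge> 4"
      using assms(2,3,5) star_attach_T2_3_3_iso_T3 by (cases "k = 3") auto
    moreover have "card A * k \<le> 5 * k" using card_A True by simp
    ultimately show ?thesis by linarith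
  next
    case False
    then have "card A * k \<le> 4 * k" using card_A by simp
    then show ?thesis using assms(2) by linarith
  qed
  then have "real (card A * k + 7) \<le> real (7 * k)" by (rule of_nat_mono)
  then have "real (card A + k - 1) * k \<le> (real k - 1) * real (order T2 + k)"
    using assms(2) unfolding order_T2 by (simp add: of_nat_diff algebra_simps)
  then show ?thesis
    using gamma_ID_star_attach_ratio_bound[OF _ assms(1,2) A] assms(3) by (simp add: verts_T2)
qed

end
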